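(* Let $A$ be a random variable (the parental haplotypes), let $X$ be a random variable (the offspring's haplotypes; $X_j$ denotes the offspring's genotype at SNP $j$, a function of $X$), let $Y$ be a random variable (the response), and let $Z$ be an external confounder, i.e. a random variable such that the conditional distribution of $X$ given $(A, Z=z)$ is the same for all values $z$ and $z'$: $$X \mid (A, Z = z) \stackrel{d}{=} X \mid (A, Z = z') \quad\text{for any } z, z'.$$ Then any valid test of the null hypothesis $H_0: X_j \perp\!\!\!\perp Y \mid A$ is also a valid test of the stronger null hypothesis $H_0': Y \perp\!\!\!\perp X_j \mid (A, Z)$. That is, if a test has probability at most $\alpha$ of rejecting whenever $X_j \perp\!\!\!\perp Y \mid A$ holds, then it also has probability at most $\alpha$ of rejecting whenever $Y \perp\!\!\!\perp X_j \mid (A,Z)$ holds.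
   Context: $B \perp\!\!\!\perp C \mid D$ denotes conditional independence of $B$ and $C$ given $D$. In the paper's setting, $A=(M^a,M^b,F^a,F^b)$ collects the two maternal and two paternal haplotypes (binary vectors over $p$ SNPs), $X=(X^m,X^f)$ are the offspring's maternally and paternally inherited haplotypes, and the genotype at SNP $j$ is $X_j = X^m_j + X^f_j$. *)

theory Defs
  imports "HOL-Probability.Probability"
begin

definition cprob :: "'w measure \<Rightarrow> ('w \<Rightarrow> 'b) \<Rightarrow> 'b set \<Rightarrow> ('w \<Rightarrow> 'd) \<Rightarrow> 'd measure \<Rightarrow> 'w \<Rightarrow> real" where
  "cprob M B S D MD = real_cond_exp M (vimage_algebra (space M) D MD) (\<lambda>w. indicator S (B w))"

definition cond_indep ::
  "'w measure \<Rightarrow> ('w \<Rightarrow> 'b) \<Rightarrow> 'b measure \<Rightarrow> ('w \<Rightarrow> 'c) \<Rightarrow> 'c measure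
     \<Rightarrow> ('w \<Rightarrow> 'd) \<Rightarrow> 'd measure \<Rightarrow> bool" where
  "cond_indep M B MB C MC D MD \<longleftrightarrow>
    (\<forall>S\<in>sets MB. \<forall>T\<in>sets MC. AE w in M.
       real_cond_exp M (vimage_algebra (space M) D MD)
          (\<lambda>w. indicator S (B w) * indicator T (C w)) w
       = cprob M B S D MD w * cprob M C T D MD w)"

text \<open>Haplotypes over the p SNPs (indexed by the finite type 'p) are binary vectors.
  Parental haplotypes A = (M^a, M^b, F^a, F^b); offspring haplotypes X = (X^m, X^f).\<close>
type_synonym 'p hap = "bool ^ 'p"
type_synonym 'p parents = "'p hap \<times> 'p hap \<times> 'p hap \<times> 'p hap"
type_synonym 'p offspring = "'p hap \<times> 'p hap"

definition genotype :: "'p::finite \<Rightarrow> 'p offspring \<Rightarrow> nat" where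
  "genotype j x = of_bool (fst x $ j) + of_bool (snd x $ j)"

definition obs_space :: "'y measure \<Rightarrow> (('p::finite parents \<times> 'p offspring) \<times> 'y) measure" where
  "obs_space MY = count_space UNIV \<Otimes>\<^sub>M MY"

definition H0 :: "'p::finite \<Rightarrow> 'y measure \<Rightarrow> (('p parents \<times> 'p offspring) \<times> 'y) measure \<Rightarrow> bool" where
  "H0 j MY P \<longleftrightarrow>
     cond_indep P (\<lambda>d. genotype j (snd (fst d))) (count_space UNIV) snd MY
                  (\<lambda>d. fst (fst d)) (count_space UNIV)"

definition valid_test_H0 ::
  "'p::finite \<Rightarrow> 'y measure \<Rightarrow> nat \<Rightarrow> (nat \<Rightarrow> ('p parents \<times> 'p offspring) \<times> 'y) set \<Rightarrow> real \<Rightarrow> bool" where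
  "valid_test_H0 j MY n R \<alpha> \<longleftrightarrow>
     R \<in> sets (PiM {..<n} (\<lambda>_. obs_space MY)) \<and>
     (\<forall>P. prob_space P \<and> sets P = sets (obs_space MY) \<and> H0 j MY P \<longrightarrow>
          measure (PiM {..<n} (\<lambda>_. P)) R \<le> \<alpha>)"

end

theory Submission
  imports Defs
begin

text \<open>Since the parental haplotypes A are discrete, a conditional expectation given A is, on each
  fibre {A = a} of positive probability, the average over that fibre. Hence conditional independence
  of X_j and Y given A amounts to the fibrewise identity
  (int_{A=a} 1_S(X_j) 1_T(Y)) P(A=a) = (int_{A=a} 1_S(X_j)) (int_{A=a} 1_T(Y)),
  which only involves the law of ((A, X), Y) and therefore carries over to it. The identity follows
  from H0': on the fibre, int 1_S(X_j) 1_T(Y) = int E[1_S(X_j) | A, Z] E[1_T(Y) | A, Z], and because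
  Z is external the first factor equals E[1_S(X_j) | A], a constant on the fibre. So the law of one
  observation satisfies H0, and the validity of the test applies to it.\<close>

lemma (in finite_measure) integrable_indicator_comp:
  assumes f: "f \<in> measurable M N" and S: "S \<in> sets N"
  shows "integrable M (\<lambda>x. indicator S (f x) :: real)"
  using measurable_compose[OF f borel_measurable_indicator[OF S]]
  by (intro integrable_const_bound[where B=1]) (auto split: split_indicator)

lemma (in finite_measure) integrable_indicator_comp_mult:
  assumes f: "f \<in> measurable M N" and S: "S \<in> sets N"
    and g: "g \<in> measurable M K" and T: "T \<in> sets K"
  shows "integrable M (\<lambda>x. indicator S (f x) * indicator T (g x) :: real)"
  using integrable_indicator_comp[OF measurable_Pair[OF f g] pair_measureI[OF S T]]
  by (simp add: indicator_times)

lemma sigma_finite_subalgebra_vimage_algebra: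
  assumes "finite_measure M" "f \<in> measurable M N"
  shows "sigma_finite_subalgebra M (vimage_algebra (space M) f N)"
proof (rule finite_measure_subalgebra_is_sigma_finite)
  show "finite_measure_subalgebra M (vimage_algebra (space M) f N)"
    using assms sets_image_in_sets[of M "space M" f N]
    by (simp add: finite_measure_subalgebra_def finite_measure_subalgebra_axioms_def subalgebra_def)
qed

lemma vimage_algebra_measurable_eq_on_fibres:
  fixes g :: "'a \<Rightarrow> 'b::t1_space"
  assumes g: "g \<in> borel_measurable (vimage_algebra X f N)"
    and "f \<in> X \<rightarrow> space N" "x \<in> X" "y \<in> X" "f x = f y"
  shows "g x = g y"
proof -
  have "g -` {g x} \<inter> X \<in> sets (vimage_algebra X f N)"
    using measurable_sets[OF g borel_closed[OF closed_singleton]] by simp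
  then obtain B where B: "g -` {g x} \<inter> X = f -` B \<inter> X"
    using assms(2) by (auto simp: sets_vimage_algebra2)
  then have "x \<in> f -` B \<inter> X"
    using \<open>x \<in> X\<close> by blast
  then have "y \<in> f -` B \<inter> X"
    using \<open>y \<in> X\<close> \<open>f x = f y\<close> by simp
  then show ?thesis
    unfolding B[symmetric] by simp
qed

lemma AE_measure_fibre_pos:
  fixes V :: "'a \<Rightarrow> 'b::countable"
  assumes "finite_measure M" "V \<in> measurable M (count_space UNIV)"
  shows "AE w in M. measure M {x \<in> space M. V x = V w} > 0"
proof -
  have "AE w in M. V w = a \<longrightarrow> measure M {x \<in> space M. V x = a} > 0" for a
  proof (cases "measure M {x \<in> space M. V x = a} > 0")
    case False
    have "{x \<in> space M. V x = a} \<in> sets M"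
      using assms(2) by measurable
    with False have "{x \<in> space M. V x = a} \<in> null_sets M"
      using assms(1) by (simp add: finite_measure.emeasure_eq_measure null_sets_def order_less_le)
    from AE_not_in[OF this] show ?thesis
      by (rule AE_mp) (auto intro!: AE_I2)
  qed simp
  then have "AE w in M. \<forall>a\<in>UNIV. V w = a \<longrightarrow> measure M {x \<in> space M. V x = a} > 0"
    by (subst AE_ball_countable) auto
  then show ?thesis
    by eventually_elim simp
qed

lemma real_cond_exp_count_space_fibre:
  assumes M: "finite_measure M" and V: "V \<in> measurable M (count_space UNIV)"
    and f: "integrable M f" and w: "w \<in> space M"
  shows "real_cond_exp M (vimage_algebra (space M) V (count_space UNIV)) f w
           * measure M {x \<in> space M. V x = V w}
         = (\<integral>x\<in>{x \<in> space M. V x = V w}. f x \<partial>M)"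
proof -
  let ?F = "vimage_algebra (space M) V (count_space UNIV)"
  let ?E = "{x \<in> space M. V x = V w}"
  interpret sigma_finite_subalgebra M ?F
    using sigma_finite_subalgebra_vimage_algebra[OF M V] .
  have E_F: "?E \<in> sets ?F"
    using in_vimage_algebra[of "{V w}" "count_space UNIV" V "space M"]
    by (simp add: vimage_def Int_def conj_commute)
  have E_M: "?E \<in> sets M"
    using V by measurable
  have "(\<integral>x\<in>?E. f x \<partial>M) = (\<integral>x\<in>?E. real_cond_exp M ?F f x \<partial>M)"
    by (rule real_cond_exp_intA[OF f E_F])
  also have "\<dots> = (\<integral>x\<in>?E. real_cond_exp M ?F f w \<partial>M)"
    using w by (intro set_lebesgue_integral_cong[OF E_M] allI impI
        vimage_algebra_measurable_eq_on_fibres[OF borel_measurable_cond_exp]) auto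
  also have "\<dots> = measure M ?E * real_cond_exp M ?F f w"
    by (simp add: set_integral_const[OF E_M] finite_measure.emeasure_eq_measure[OF M])
  finally show ?thesis
    by simp
qed

lemma real_cond_exp_mult_if_fibre_integrals:
  fixes V :: "'a \<Rightarrow> 'b::countable"
  assumes M: "finite_measure M" and V: "V \<in> measurable M (count_space UNIV)"
    and f: "integrable M f" and g: "integrable M g" and fg: "integrable M (\<lambda>x. f x * g x)"
    and fibres: "\<And>a. (\<integral>x\<in>{x \<in> space M. V x = a}. f x * g x \<partial>M) * measure M {x \<in> space M. V x = a}
                   = (\<integral>x\<in>{x \<in> space M. V x = a}. f x \<partial>M) * (\<integral>x\<in>{x \<in> space M. V x = a}. g x \<partial>M)"
  shows "AE w in M.
           real_cond_exp M (vimage_algebra (space M) V (count_space UNIV)) (\<lambda>x. f x * g x) w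
           = real_cond_exp M (vimage_algebra (space M) V (count_space UNIV)) f w
             * real_cond_exp M (vimage_algebra (space M) V (count_space UNIV)) g w"
  using AE_space AE_measure_fibre_pos[OF M V]
proof eventually_elim
  case (elim w)
  let ?F = "vimage_algebra (space M) V (count_space UNIV)"
  define p where "p = measure M {x \<in> space M. V x = V w}"
  note fibre = real_cond_exp_count_space_fibre[OF M V _ elim(1), folded p_def]
  have "real_cond_exp M ?F (\<lambda>x. f x * g x) w * p * p
        = (real_cond_exp M ?F f w * p) * (real_cond_exp M ?F g w * p)"
    using fibre[OF fg] fibre[OF f] fibre[OF g] fibres[of "V w", folded p_def] by simp
  then show ?case
    using elim(2) unfolding p_def[symmetric] by (simp add: algebra_simps)
qed

lemma (in sigma_finite_subalgebra) set_integral_mult_if_real_cond_exp_const: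
  assumes E: "E \<in> sets F" and fg: "integrable M (\<lambda>x. f x * g x)" and g: "integrable M g"
    and mult: "AE x in M. real_cond_exp M F (\<lambda>x. f x * g x) x
                          = real_cond_exp M F f x * real_cond_exp M F g x"
    and const: "AE x in M. x \<in> E \<longrightarrow> real_cond_exp M F f x = c"
  shows "(\<integral>x\<in>E. f x * g x \<partial>M) = c * (\<integral>x\<in>E. g x \<partial>M)"
proof -
  have E_M: "E \<in> sets M"
    using E subalg by (auto simp: subalgebra_def)
  have "(\<integral>x\<in>E. f x * g x \<partial>M) = (\<integral>x\<in>E. real_cond_exp M F (\<lambda>x. f x * g x) x \<partial>M)"
    by (rule real_cond_exp_intA[OF fg E])
  also have "\<dots> = (\<integral>x\<in>E. c * real_cond_exp M F g x \<partial>M)"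
    using mult const by (intro set_lebesgue_integral_cong_AE[OF E_M]) auto
  also have "\<dots> = c * (\<integral>x\<in>E. g x \<partial>M)"
    using real_cond_exp_intA[OF g E] by simp
  finally show ?thesis .
qed

lemma fibre_integrals_mult_if_cond_indep_given_finer:
  assumes M: "finite_measure M" and V: "V \<in> measurable M (count_space UNIV)"
    and G: "sigma_finite_subalgebra M G" and E_G: "{x \<in> space M. V x = a} \<in> sets G"
    and f: "integrable M f" and g: "integrable M g" and fg: "integrable M (\<lambda>x. f x * g x)"
    and mult: "AE x in M. real_cond_exp M G (\<lambda>x. f x * g x) x
                          = real_cond_exp M G f x * real_cond_exp M G g x"
    and coarse: "AE x in M. real_cond_exp M G f x
                   = real_cond_exp M (vimage_algebra (space M) V (count_space UNIV)) f x"
  shows "(\<integral>x\<in>{x \<in> space M. V x = a}. f x * g x \<partial>M) * measure M {x \<in> space M. V x = a}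
         = (\<integral>x\<in>{x \<in> space M. V x = a}. f x \<partial>M) * (\<integral>x\<in>{x \<in> space M. V x = a}. g x \<partial>M)"
proof (cases "{x \<in> space M. V x = a} = {}")
  case True
  then show ?thesis
    by (simp only: True) (simp add: set_lebesgue_integral_def)
next
  case False
  then obtain w where w: "w \<in> space M" "V w = a"
    by blast
  let ?E = "{x \<in> space M. V x = a}"
  define c where "c = real_cond_exp M (vimage_algebra (space M) V (count_space UNIV)) f w"
  have "AE x in M. x \<in> ?E \<longrightarrow> real_cond_exp M G f x = c"
    using AE_space coarse
  proof eventually_elim
    case (elim x)
    then show ?case
      using w unfolding c_def
      by (auto intro: vimage_algebra_measurable_eq_on_fibres[OF borel_measurable_cond_exp])
  qed
  then have "(\<integral>x\<in>?E. f x * g x \<partial>M) = c * (\<integral>x\<in>?E. g x \<partial>M)"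
    by (rule sigma_finite_subalgebra.set_integral_mult_if_real_cond_exp_const[OF G E_G fg g mult])
  moreover have "(\<integral>x\<in>?E. f x \<partial>M) = c * measure M ?E"
    using real_cond_exp_count_space_fibre[OF M V f w(1)] w(2) unfolding c_def by simp
  ultimately show ?thesis
    by (simp add: mult_ac)
qed

lemma set_integral_distr:
  fixes h :: "'b \<Rightarrow> real"
  assumes \<Phi>: "\<Phi> \<in> measurable M N" and A: "A \<in> sets N" and h: "h \<in> borel_measurable N"
  shows "(\<integral>x\<in>A. h x \<partial>distr M N \<Phi>) = (\<integral>w\<in>\<Phi> -` A \<inter> space M. h (\<Phi> w) \<partial>M)"
proof -
  have "(\<integral>x\<in>A. h x \<partial>distr M N \<Phi>) = (\<integral>w. indicator A (\<Phi> w) *\<^sub>R h (\<Phi> w) \<partial>M)"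
    unfolding set_lebesgue_integral_def by (rule integral_distr[OF \<Phi>]) (use A h in simp)
  also have "\<dots> = (\<integral>w\<in>\<Phi> -` A \<inter> space M. h (\<Phi> w) \<partial>M)"
    unfolding set_lebesgue_integral_def
    by (intro Bochner_Integration.integral_cong) (simp_all split: split_indicator)
  finally show ?thesis .
qed

lemma fibre_integral_distr:
  fixes h :: "'b \<Rightarrow> real"
  assumes \<Phi>: "\<Phi> \<in> measurable M N" and D: "D \<in> measurable N (count_space UNIV)"
    and h: "h \<in> borel_measurable N"
  shows "(\<integral>x\<in>{x \<in> space (distr M N \<Phi>). D x = a}. h x \<partial>distr M N \<Phi>)
         = (\<integral>w\<in>{w \<in> space M. D (\<Phi> w) = a}. h (\<Phi> w) \<partial>M)"
proof -
  have "{x \<in> space N. D x = a} \<in> sets N"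
    using D by measurable
  moreover have "\<Phi> -` {x \<in> space N. D x = a} \<inter> space M = {w \<in> space M. D (\<Phi> w) = a}"
    using measurable_space[OF \<Phi>] by auto
  ultimately show ?thesis
    using set_integral_distr[OF \<Phi> _ h] by simp
qed

lemma measure_fibre_distr:
  assumes \<Phi>: "\<Phi> \<in> measurable M N" and D: "D \<in> measurable N (count_space UNIV)"
  shows "measure (distr M N \<Phi>) {x \<in> space (distr M N \<Phi>). D x = a} = measure M {w \<in> space M. D (\<Phi> w) = a}"
proof -
  have "{x \<in> space N. D x = a} \<in> sets N"
    using D by measurable
  moreover have "\<Phi> -` {x \<in> space N. D x = a} \<inter> space M = {w \<in> space M. D (\<Phi> w) = a}"
    using measurable_space[OF \<Phi>] by auto
  ultimately show ?thesis
    using measure_distr[OF \<Phi>] by simp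
qed

lemma cond_indep_distr_if_fibre_integrals:
  fixes D :: "'b \<Rightarrow> 'd::countable"
  assumes M: "prob_space M" and \<Phi>: "\<Phi> \<in> measurable M N"
    and B: "B \<in> measurable N MB" and C: "C \<in> measurable N MC"
    and D: "D \<in> measurable N (count_space UNIV)"
    and fibres: "\<And>S T a. S \<in> sets MB \<Longrightarrow> T \<in> sets MC \<Longrightarrow>
      (\<integral>w\<in>{w \<in> space M. D (\<Phi> w) = a}. indicator S (B (\<Phi> w)) * indicator T (C (\<Phi> w)) \<partial>M)
        * measure M {w \<in> space M. D (\<Phi> w) = a}
      = (\<integral>w\<in>{w \<in> space M. D (\<Phi> w) = a}. indicator S (B (\<Phi> w)) \<partial>M)
        * (\<integral>w\<in>{w \<in> space M. D (\<Phi> w) = a}. indicator T (C (\<Phi> w)) \<partial>M)"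
  shows "cond_indep (distr M N \<Phi>) B MB C MC D (count_space UNIV)"
  unfolding cond_indep_def cprob_def
proof (intro ballI)
  fix S T assume S: "S \<in> sets MB" and T: "T \<in> sets MC"
  let ?P = "distr M N \<Phi>"
  interpret P: prob_space ?P
    using M \<Phi> by (rule prob_space.prob_space_distr)
  have B_P: "B \<in> measurable ?P MB" and C_P: "C \<in> measurable ?P MC"
    using B C by simp_all
  have f_N: "(\<lambda>x. indicator S (B x) :: real) \<in> borel_measurable N"
    using measurable_compose[OF B borel_measurable_indicator[OF S]] .
  have g_N: "(\<lambda>x. indicator T (C x) :: real) \<in> borel_measurable N"
    using measurable_compose[OF C borel_measurable_indicator[OF T]] .
  have fg_N: "(\<lambda>x. indicator S (B x) * indicator T (C x) :: real) \<in> borel_measurable N"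
    using f_N g_N by (rule borel_measurable_times)
  show "AE x in ?P.
          real_cond_exp ?P (vimage_algebra (space ?P) D (count_space UNIV))
            (\<lambda>x. indicator S (B x) * indicator T (C x)) x
          = real_cond_exp ?P (vimage_algebra (space ?P) D (count_space UNIV)) (\<lambda>x. indicator S (B x)) x
            * real_cond_exp ?P (vimage_algebra (space ?P) D (count_space UNIV)) (\<lambda>x. indicator T (C x)) x"
  proof (rule real_cond_exp_mult_if_fibre_integrals[OF P.finite_measure_axioms])
    show "D \<in> measurable ?P (count_space UNIV)"
      using D by simp
    show "integrable ?P (\<lambda>x. indicator S (B x) :: real)"
      by (rule P.integrable_indicator_comp[OF B_P S])
    show "integrable ?P (\<lambda>x. indicator T (C x) :: real)"
      by (rule P.integrable_indicator_comp[OF C_P T])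
    show "integrable ?P (\<lambda>x. indicator S (B x) * indicator T (C x) :: real)"
      by (rule P.integrable_indicator_comp_mult[OF B_P S C_P T])
    fix a
    show "(\<integral>x\<in>{x \<in> space ?P. D x = a}. indicator S (B x) * indicator T (C x) \<partial>?P)
            * measure ?P {x \<in> space ?P. D x = a}
          = (\<integral>x\<in>{x \<in> space ?P. D x = a}. indicator S (B x) \<partial>?P)
            * (\<integral>x\<in>{x \<in> space ?P. D x = a}. indicator T (C x) \<partial>?P)"
      unfolding fibre_integral_distr[OF \<Phi> D f_N] fibre_integral_distr[OF \<Phi> D g_N]
        fibre_integral_distr[OF \<Phi> D fg_N] measure_fibre_distr[OF \<Phi> D]
      by (rule fibres[OF S T])
  qed
qed

lemma fibre_integrals_mult_if_external_confounder:
  fixes A :: "'w \<Rightarrow> 'a" and X :: "'w \<Rightarrow> 'x" and \<gamma> :: "'x \<Rightarrow> 'g"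
  assumes M: "prob_space M"
    and A: "A \<in> measurable M (count_space UNIV)" and X: "X \<in> measurable M (count_space UNIV)"
    and Y: "Y \<in> measurable M MY" and Z: "Z \<in> measurable M MZ"
    and external: "\<forall>S. AE w in M.
          cprob M X S (\<lambda>w. (A w, Z w)) (count_space UNIV \<Otimes>\<^sub>M MZ) w
          = cprob M X S A (count_space UNIV) w"
    and indep_given_AZ: "cond_indep M Y MY (\<lambda>w. \<gamma> (X w)) (count_space UNIV)
                (\<lambda>w. (A w, Z w)) (count_space UNIV \<Otimes>\<^sub>M MZ)"
    and T: "T \<in> sets MY"
  shows "(\<integral>w\<in>{w \<in> space M. A w = a}. indicator S (\<gamma> (X w)) * indicator T (Y w) \<partial>M)
           * measure M {w \<in> space M. A w = a}
         = (\<integral>w\<in>{w \<in> space M. A w = a}. indicator S (\<gamma> (X w)) \<partial>M)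
           * (\<integral>w\<in>{w \<in> space M. A w = a}. indicator T (Y w) \<partial>M)"
proof -
  interpret M: prob_space M by fact
  let ?G = "vimage_algebra (space M) (\<lambda>w. (A w, Z w)) (count_space UNIV \<Otimes>\<^sub>M MZ)"
  let ?f = "\<lambda>w. indicator S (\<gamma> (X w)) :: real" and ?g = "\<lambda>w. indicator T (Y w) :: real"
  have AZ: "(\<lambda>w. (A w, Z w)) \<in> measurable M (count_space UNIV \<Otimes>\<^sub>M MZ)"
    using A Z by (rule measurable_Pair)
  have "(\<lambda>w. (A w, Z w)) -` ({a} \<times> space MZ) \<inter> space M \<in> sets ?G"
    by (intro in_vimage_algebra pair_measureI) auto
  moreover have "(\<lambda>w. (A w, Z w)) -` ({a} \<times> space MZ) \<inter> space M = {w \<in> space M. A w = a}"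
    using measurable_space[OF Z] by auto
  ultimately have E_G: "{w \<in> space M. A w = a} \<in> sets ?G"
    by simp
  have \<gamma>X: "(\<lambda>w. \<gamma> (X w)) \<in> measurable M (count_space UNIV)"
    using measurable_compose[OF X, of \<gamma>] by simp
  have f: "integrable M ?f"
    by (rule M.integrable_indicator_comp[OF \<gamma>X]) simp
  have g: "integrable M ?g"
    by (rule M.integrable_indicator_comp[OF Y T])
  have fg: "integrable M (\<lambda>w. ?f w * ?g w)"
    by (rule M.integrable_indicator_comp_mult[OF \<gamma>X _ Y T]) simp
  have mult: "AE w in M. real_cond_exp M ?G (\<lambda>w. ?f w * ?g w) w
                          = real_cond_exp M ?G ?f w * real_cond_exp M ?G ?g w"
    using indep_given_AZ[unfolded cond_indep_def cprob_def, rule_format, OF T, of S]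
    by (simp add: mult.commute)
  have coarse: "AE w in M. real_cond_exp M ?G ?f w
                  = real_cond_exp M (vimage_algebra (space M) A (count_space UNIV)) ?f w"
    using external[rule_format, of "\<gamma> -` S"] unfolding cprob_def indicator_vimage .
  show ?thesis
    by (rule fibre_integrals_mult_if_cond_indep_given_finer[OF M.finite_measure_axioms A
          sigma_finite_subalgebra_vimage_algebra[OF M.finite_measure_axioms AZ] E_G f g fg mult coarse])
qed

theorem theorem1:
  fixes j :: "'p::finite" and MY :: "'y measure" and MZ :: "'z measure"
    and n :: nat and R :: "(nat \<Rightarrow> ('p parents \<times> 'p offspring) \<times> 'y) set" and \<alpha> :: real
    and M :: "'w measure" and A :: "'w \<Rightarrow> 'p parents" and X :: "'w \<Rightarrow> 'p offspring"
    and Y :: "'w \<Rightarrow> 'y" and Z :: "'w \<Rightarrow> 'z"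
  assumes valid: "valid_test_H0 j MY n R \<alpha>"
    and M: "prob_space M"
    and A: "A \<in> measurable M (count_space UNIV)"
    and X: "X \<in> measurable M (count_space UNIV)"
    and Y: "Y \<in> measurable M MY"
    and Z: "Z \<in> measurable M MZ"
    and external: "\<forall>S. AE w in M.
          cprob M X S (\<lambda>w. (A w, Z w)) (count_space UNIV \<Otimes>\<^sub>M MZ) w
          = cprob M X S A (count_space UNIV) w"
    and H0': "cond_indep M Y MY (\<lambda>w. genotype j (X w)) (count_space UNIV)
                (\<lambda>w. (A w, Z w)) (count_space UNIV \<Otimes>\<^sub>M MZ)"
  shows "measure (PiM {..<n} (\<lambda>_. distr M (obs_space MY) (\<lambda>w. ((A w, X w), Y w)))) R \<le> \<alpha>"
proof -
  let ?\<Phi> = "\<lambda>w. ((A w, X w), Y w)"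
  have AX: "(\<lambda>w. (A w, X w)) \<in> measurable M (count_space UNIV)"
    using measurable_Pair[OF A X] by (simp add: pair_measure_countable)
  have \<Phi>: "?\<Phi> \<in> measurable M (obs_space MY)"
    unfolding obs_space_def using AX Y by (rule measurable_Pair)
  have "H0 j MY (distr M (obs_space MY) ?\<Phi>)"
    unfolding H0_def
    by (rule cond_indep_distr_if_fibre_integrals[OF M \<Phi>])
      (simp_all add: obs_space_def measurable_compose[OF measurable_fst]
        fibre_integrals_mult_if_external_confounder[where \<gamma> = "genotype j", OF M A X Y Z external H0'])
  moreover have "prob_space (distr M (obs_space MY) ?\<Phi>)"
    using M \<Phi> by (rule prob_space.prob_space_distr)
  ultimately show ?thesis
    using valid unfolding valid_test_H0_def by simp
qed

end
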